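(* Let $n=3$ and $\kappa=1$. For all $u,v\in\mathcal A_3^*$, $$u\equiv_{\mathrm{knu}}v\iff\big(\mho(u)=\mho(v)\ \text{and}\ \Omega(u)=\Omega(v)\big).$$ Equivalently, $w\mapsto(\mho(w),\Omega(w))$ induces an injective monoid homomorphism from the plactic monoid $\mathcal P_3=\mathcal A_3^*/{\equiv_{\mathrm{knu}}}$ into $\mathrm{TMat}_3(\mathbb T)\times\mathrm{TMat}_3(\mathbb T)$.
   Context: $\mathcal A_3=\{a_1<a_2<a_3\}$; $\equiv_{\mathrm{knu}}$ is the congruence generated by $xzy=zxy$ ($x\le y<z$) and $yxz=yzx$ ($x<y\le z$). Max-plus semiring $\mathbb T=\mathbb R\cup\{-\infty\}$, product $(X\odot Y)_{i,j}=\max_t(x_{i,t}+y_{t,j})$; $\mathrm{TMat}_3(\mathbb T)$ the upper triangular $3\times3$ matrices. $\mho,\Omega$ are the monoid homomorphisms with $\mho(e)=\Omega(e)=E$, $\mho(a_\ell)=A^{(\ell)}$, $\Omega(a_\ell)=\check A^{(\ell)}$, where $E_{i,j}=0$ ($i\le j$), $-\infty$ ($i>j$); $A^{(\ell)}_{i,j}=1$ if $i\le\ell\le j$, $0$ if $i\le j$ otherwise, $-\infty$ if $i>j$; $\check A^{(\ell)}_{4-\ell,4-\ell}=-1$, $\check A^{(\ell)}_{i,j}=0$ for all other $i\le j$, $-\infty$ for $i>j$. *)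

theory Defs
  imports Complex_Main "HOL-Library.Extended_Real"
begin

text \<open>Words over the alphabet A_3 = {1 < 2 < 3} are lists of naturals with letters in {1,2,3}.\<close>

inductive knuth_equiv :: "nat list \<Rightarrow> nat list \<Rightarrow> bool" where
  knu_refl: "knuth_equiv w w"
| knu_sym: "knuth_equiv u v \<Longrightarrow> knuth_equiv v u"
| knu_trans: "knuth_equiv u v \<Longrightarrow> knuth_equiv v w \<Longrightarrow> knuth_equiv u w"
| knu1: "x \<le> y \<Longrightarrow> y < z \<Longrightarrow> knuth_equiv (p @ [x, z, y] @ q) (p @ [z, x, y] @ q)"
| knu2: "x < y \<Longrightarrow> y \<le> z \<Longrightarrow> knuth_equiv (p @ [y, x, z] @ q) (p @ [y, z, x] @ q)"

text \<open>Tropical (max-plus) 3x3 matrices: entries in ereal (only reals and -\<infinity> occur),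
  indexed by 1..3; entries outside the index range are fixed to -\<infinity>.\<close>

type_synonym tmat = "nat \<Rightarrow> nat \<Rightarrow> ereal"

definition tmult :: "tmat \<Rightarrow> tmat \<Rightarrow> tmat" where
  "tmult X Y = (\<lambda>i j. if i \<in> {1..3} \<and> j \<in> {1..3}
       then Max ((\<lambda>t. X i t + Y t j) ` {1..3}) else -\<infinity>)"

definition tE :: tmat where
  "tE = (\<lambda>i j. if i \<in> {1..3} \<and> j \<in> {1..3} then (if i \<le> j then 0 else -\<infinity>) else -\<infinity>)"

definition tA :: "nat \<Rightarrow> tmat" where
  "tA l = (\<lambda>i j. if i \<in> {1..3} \<and> j \<in> {1..3} then
      (if i \<le> j then (if i \<le> l \<and> l \<le> j then 1 else 0) else -\<infinity>) else -\<infinity>)"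

definition tAcheck :: "nat \<Rightarrow> tmat" where
  "tAcheck l = (\<lambda>i j. if i \<in> {1..3} \<and> j \<in> {1..3} then
      (if i \<le> j then (if i = 4 - l \<and> j = 4 - l then -1 else 0) else -\<infinity>) else -\<infinity>)"

definition mho :: "nat list \<Rightarrow> tmat" where
  "mho w = foldr (\<lambda>a M. tmult (tA a) M) w tE"

definition Omega :: "nat list \<Rightarrow> tmat" where
  "Omega w = foldr (\<lambda>a M. tmult (tAcheck a) M) w tE"

end

theory Submission
  imports Defs
begin

text \<open>
  Upper triangular tropical matrices with real entries on and above the diagonal form a semigroup,
  and both \<open>mho\<close> and \<open>Omega\<close> factor through it. Soundness: the generators satisfy the two
  Knuth relations (a finite check), so the images are invariant under Knuth equivalence. Completeness: by
  Schensted row insertion every word over \<open>{1,2,3}\<close> is Knuth equivalent to the row reading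
  \<open>3\<^sup>f 2\<^sup>d 3\<^sup>e 1\<^sup>a 2\<^sup>b 3\<^sup>c\<close> of a semistandard tableau. For such a word \<open>mho\<close> has diagonal and
  first row \<open>(a, d + b, f + e + c)\<close> and \<open>(a, a + b, a + b + c)\<close>, and the \<open>(1,3)\<close> entry of \<open>Omega\<close>
  is \<open>-f\<close>; together they recover all six exponents.
\<close>

section \<open>Upper triangular tropical matrices\<close>

datatype utmat = UT real real real real real real

instantiation utmat :: semigroup_mult
begin

fun times_utmat :: "utmat \<Rightarrow> utmat \<Rightarrow> utmat" where
  "UT a11 a12 a13 a22 a23 a33 * UT b11 b12 b13 b22 b23 b33 =
    UT (a11 + b11) (max (a11 + b12) (a12 + b22)) (max (max (a11 + b13) (a12 + b23)) (a13 + b33))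
      (a22 + b22) (max (a22 + b23) (a23 + b33)) (a33 + b33)"

instance
proof
  fix X Y W :: utmat
  show "X * Y * W = X * (Y * W)"
    by (cases X; cases Y; cases W)
      (simp add: max_add_distrib_left max_add_distrib_right ac_simps)
qed

end

fun to_tmat :: "utmat \<Rightarrow> tmat" where
  "to_tmat (UT p11 p12 p13 p22 p23 p33) = (\<lambda>i j.
     if i = 1 \<and> j = 1 then ereal p11 else
     if i = 1 \<and> j = 2 then ereal p12 else
     if i = 1 \<and> j = 3 then ereal p13 else
     if i = 2 \<and> j = 2 then ereal p22 else
     if i = 2 \<and> j = 3 then ereal p23 else
     if i = 3 \<and> j = 3 then ereal p33 else -\<infinity>)"

lemma to_tmat_inject: "to_tmat X = to_tmat Y \<longleftrightarrow> X = Y"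
proof
  assume eq: "to_tmat X = to_tmat Y"
  show "X = Y"
  proof (cases X; cases Y)
    fix a b c d e f a' b' c' d' e' f'
    assume "X = UT a b c d e f" "Y = UT a' b' c' d' e' f'"
    with eq have "\<And>i j. to_tmat (UT a b c d e f) i j = to_tmat (UT a' b' c' d' e' f') i j"
      by simp
    from this[of 1 1] this[of 1 2] this[of 1 3] this[of 2 2] this[of 2 3] this[of 3 3]
    show "X = Y" using \<open>X = _\<close> \<open>Y = _\<close> by simp
  qed
qed simp

lemma tmult_to_tmat: "tmult (to_tmat X) (to_tmat Y) = to_tmat (X * Y)"
proof (cases X; cases Y)
  fix a b c d e f a' b' c' d' e' f'
  assume X: "X = UT a b c d e f" and Y: "Y = UT a' b' c' d' e' f'"
  have "{1..3::nat} = {1, 2, 3}" by auto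
  then show ?thesis
    by (intro ext) (auto simp: X Y tmult_def max.assoc)
qed

lemma to_tmat_eqI:
  assumes "\<And>i j. \<not> (1 \<le> i \<and> i \<le> j \<and> j \<le> 3) \<Longrightarrow> M i j = -\<infinity>"
    and "M 1 1 = ereal p11" "M 1 2 = ereal p12" "M 1 3 = ereal p13"
    and "M 2 2 = ereal p22" "M 2 3 = ereal p23" "M 3 3 = ereal p33"
  shows "M = to_tmat (UT p11 p12 p13 p22 p23 p33)"
proof (intro ext)
  fix i j :: nat
  consider "\<not> (1 \<le> i \<and> i \<le> j \<and> j \<le> 3)" | "i = 1" "j = 1" | "i = 1" "j = 2" | "i = 1" "j = 3"
    | "i = 2" "j = 2" | "i = 2" "j = 3" | "i = 3" "j = 3"
    by linarith
  then show "M i j = to_tmat (UT p11 p12 p13 p22 p23 p33) i j"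
    by cases (use assms in auto)
qed

definition utE :: utmat where
  "utE = UT 0 0 0 0 0 0"

definition utA :: "nat \<Rightarrow> utmat" where
  "utA l = UT (of_bool (l = 1)) (of_bool (1 \<le> l \<and> l \<le> 2)) (of_bool (1 \<le> l \<and> l \<le> 3))
    (of_bool (l = 2)) (of_bool (2 \<le> l \<and> l \<le> 3)) (of_bool (l = 3))"

definition utAcheck :: "nat \<Rightarrow> utmat" where
  "utAcheck l = UT (- of_bool (l = 3)) 0 0 (- of_bool (l = 2)) 0 (- of_bool (l = 1))"

lemma tE_eq: "tE = to_tmat utE"
  unfolding utE_def by (rule to_tmat_eqI) (auto simp: tE_def)

lemma tA_eq: "tA l = to_tmat (utA l)"
  unfolding utA_def by (rule to_tmat_eqI) (auto simp: tA_def)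

lemma tAcheck_eq: "tAcheck l = to_tmat (utAcheck l)"
  unfolding utAcheck_def by (rule to_tmat_eqI) (auto simp: tAcheck_def one_ereal_def)

definition word_eval :: "(nat \<Rightarrow> 'a::times) \<Rightarrow> 'a \<Rightarrow> nat list \<Rightarrow> 'a" where
  "word_eval g z w = foldr (\<lambda>a M. g a * M) w z"

lemma word_eval_Nil [simp]: "word_eval g z [] = z"
  and word_eval_Cons [simp]: "word_eval g z (a # w) = g a * word_eval g z w"
  and word_eval_append [simp]: "word_eval g z (u @ v) = word_eval g (word_eval g z v) u"
  by (simp_all add: word_eval_def)

lemma mho_eq_word_eval: "mho w = to_tmat (word_eval utA utE w)"
  by (induction w) (simp_all add: mho_def tE_eq tA_eq tmult_to_tmat)

lemma Omega_eq_word_eval: "Omega w = to_tmat (word_eval utAcheck utE w)"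
  by (induction w) (simp_all add: Omega_def tE_eq tAcheck_eq tmult_to_tmat)

definition plactic_relations :: "nat set \<Rightarrow> (nat \<Rightarrow> 'a::times) \<Rightarrow> bool" where
  "plactic_relations S g \<longleftrightarrow> (\<forall>x\<in>S. \<forall>y\<in>S. \<forall>z\<in>S.
     (x \<le> y \<and> y < z \<longrightarrow> g x * g z * g y = g z * g x * g y) \<and>
     (x < y \<and> y \<le> z \<longrightarrow> g y * g x * g z = g y * g z * g x))"

lemma utA_values: "utA (Suc 0) = UT 1 1 1 0 0 0" "utA 2 = UT 0 1 1 1 1 0" "utA 3 = UT 0 0 1 0 1 1"
  by (simp_all add: utA_def)

lemma utAcheck_values:
  "utAcheck (Suc 0) = UT 0 0 0 0 0 (-1)" "utAcheck 2 = UT 0 0 0 (-1) 0 0" "utAcheck 3 = UT (-1) 0 0 0 0 0"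
  by (simp_all add: utAcheck_def)

lemma plactic_relations_utA: "plactic_relations {1, 2, 3} utA"
  unfolding plactic_relations_def by (simp add: utA_values)

lemma plactic_relations_utAcheck: "plactic_relations {1, 2, 3} utAcheck"
  unfolding plactic_relations_def by (simp add: utAcheck_values)

lemma knuth_equiv_set_eq: "knuth_equiv u v \<Longrightarrow> set u = set v"
  by (induction rule: knuth_equiv.induct) auto

lemma word_eval_knuth_invariant:
  fixes g :: "nat \<Rightarrow> 'a::semigroup_mult"
  assumes rels: "plactic_relations S g" and "knuth_equiv u v" and "set u \<subseteq> S"
  shows "word_eval g m u = word_eval g m v"
  using assms(2,3)
proof (induction rule: knuth_equiv.induct)
  case (knu_sym u v)
  then show ?case using knuth_equiv_set_eq[of u v] by simp
next
  case (knu_trans u v w)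
  then show ?case using knuth_equiv_set_eq[of u v] by simp
next
  case (knu1 x y z p q)
  from knu1.prems have "x \<in> S" "y \<in> S" "z \<in> S" by auto
  with knu1.hyps rels have "g x * g z * g y = g z * g x * g y"
    unfolding plactic_relations_def by blast
  then show ?case by (simp flip: mult.assoc)
next
  case (knu2 x y z p q)
  from knu2.prems have "x \<in> S" "y \<in> S" "z \<in> S" by auto
  with knu2.hyps rels have "g y * g x * g z = g y * g z * g x"
    unfolding plactic_relations_def by blast
  then show ?case by (simp flip: mult.assoc)
qed simp

section \<open>Reduction to tableau reading words\<close>

declare knu_trans [trans]

lemma knuth_equiv_cong: "knuth_equiv u v \<Longrightarrow> knuth_equiv (p @ u @ q) (p @ v @ q)"
proof (induction rule: knuth_equiv.induct)
  case (knu1 x y z p' q')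
  then show ?case using knuth_equiv.knu1[of x y z "p @ p'" "q' @ q"] by simp
next
  case (knu2 x y z p' q')
  then show ?case using knuth_equiv.knu2[of x y z "p @ p'" "q' @ q"] by simp
qed (blast intro: knuth_equiv.intros)+

lemma knuth_equiv_append_left: "knuth_equiv u v \<Longrightarrow> knuth_equiv (p @ u) (p @ v)"
  using knuth_equiv_cong[of u v p "[]"] by simp

lemma knuth_equiv_append_right: "knuth_equiv u v \<Longrightarrow> knuth_equiv (u @ q) (v @ q)"
  using knuth_equiv_cong[of u v "[]" q] by simp

lemma knuth_move_letter_past_larger_block:
  assumes "x < y" "y \<le> z"
  shows "knuth_equiv (y # replicate c z @ [x]) (y # x # replicate c z)"
  using assms
proof (induction c arbitrary: y)
  case 0
  then show ?case by (simp add: knu_refl)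
next
  case (Suc c)
  have "knuth_equiv (y # replicate (Suc c) z @ [x]) ([y] @ (z # replicate c z @ [x]))"
    by (simp add: knu_refl)
  also have "knuth_equiv \<dots> ([y] @ (z # x # replicate c z))"
    using Suc by (intro knuth_equiv_append_left Suc.IH) simp_all
  also have "knuth_equiv \<dots> ([] @ [y, x, z] @ replicate c z)"
    using knu2[of x y z "[]" "replicate c z"] Suc.prems by (simp add: knu_sym)
  finally show ?case by simp
qed

lemma knuth_move_letter_past_smaller_block:
  assumes "x \<le> y" "y < z"
  shows "knuth_equiv (replicate a x @ [z, y]) (z # replicate a x @ [y])"
  using assms
proof (induction a arbitrary: y)
  case 0
  then show ?case by (simp add: knu_refl)
next
  case (Suc a)
  have "knuth_equiv (replicate (Suc a) x @ [z, y]) (replicate a x @ [x, z, y] @ [])"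
    by (simp add: replicate_append_same[symmetric] knu_refl)
  also have "knuth_equiv \<dots> (replicate a x @ [z, x, y] @ [])"
    using Suc.prems by (intro knu1) simp_all
  also have "knuth_equiv \<dots> ((replicate a x @ [z, x]) @ [y])"
    by (simp add: knu_refl)
  also have "knuth_equiv \<dots> ((z # replicate a x @ [x]) @ [y])"
    using Suc.prems by (intro knuth_equiv_append_right Suc.IH) simp_all
  finally show ?case by (simp add: replicate_append_same)
qed

text \<open>
  Schensted insertion into the row \<open>x\<^sup>a y\<^sup>b z\<^sup>c\<close>: the leftmost letter larger than the inserted
  one is bumped to the row above, i.e.\ to the front of the reading word.
\<close>

lemma knuth_row_insert_middle:
  assumes "x \<le> y" "y < z"
  shows "knuth_equiv (replicate a x @ replicate b y @ replicate (Suc c) z @ [y])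
    (z # replicate a x @ replicate (Suc b) y @ replicate c z)"
proof -
  have "knuth_equiv (replicate a x @ replicate b y @ replicate (Suc c) z @ [y])
      ((replicate a x @ replicate b y) @ (z # replicate c z @ [y]))"
    by (simp add: knu_refl)
  also have "knuth_equiv \<dots> ((replicate a x @ replicate b y) @ (z # y # replicate c z))"
    using assms by (intro knuth_equiv_append_left knuth_move_letter_past_larger_block) simp_all
  also have "knuth_equiv \<dots> (replicate a x @ (replicate b y @ [z, y]) @ replicate c z)"
    by (simp add: knu_refl)
  also have "knuth_equiv \<dots> (replicate a x @ (z # replicate b y @ [y]) @ replicate c z)"
    using assms by (intro knuth_equiv_cong knuth_move_letter_past_smaller_block) simp_all
  also have "knuth_equiv \<dots> ((replicate a x @ [z, y]) @ replicate b y @ replicate c z)"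
    by (simp add: knu_refl replicate_app_Cons_same)
  also have "knuth_equiv \<dots> ((z # replicate a x @ [y]) @ replicate b y @ replicate c z)"
    using assms by (intro knuth_equiv_append_right knuth_move_letter_past_smaller_block)
  finally show ?thesis by (simp add: replicate_app_Cons_same)
qed

lemma knuth_row_insert_least:
  assumes "x < y" "y \<le> z"
  shows "knuth_equiv (replicate a x @ replicate (Suc b) y @ replicate c z @ [x])
    (y # replicate (Suc a) x @ replicate b y @ replicate c z)"
proof -
  have "knuth_equiv (replicate a x @ replicate (Suc b) y @ replicate c z @ [x])
      ((replicate a x @ replicate b y) @ (y # replicate c z @ [x]))"
    by (simp add: replicate_append_same[symmetric] knu_refl)
  also have "knuth_equiv \<dots> ((replicate a x @ replicate b y) @ (y # x # replicate c z))"
    using assms by (intro knuth_equiv_append_left knuth_move_letter_past_larger_block)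
  also have "knuth_equiv \<dots> (replicate a x @ (y # replicate b y @ [x]) @ replicate c z)"
    by (simp add: knu_refl replicate_app_Cons_same)
  also have "knuth_equiv \<dots> (replicate a x @ (y # x # replicate b y) @ replicate c z)"
    using assms by (intro knuth_equiv_cong knuth_move_letter_past_larger_block) simp_all
  also have "knuth_equiv \<dots> ((replicate a x @ [y, x]) @ replicate b y @ replicate c z)"
    by (simp add: knu_refl)
  also have "knuth_equiv \<dots> ((y # replicate a x @ [x]) @ replicate b y @ replicate c z)"
    using assms by (intro knuth_equiv_append_right knuth_move_letter_past_smaller_block) simp_all
  finally show ?thesis by (simp add: replicate_append_same)
qed

text \<open>
  The row reading word, top row first, of the tableau with rows \<open>1\<^sup>a 2\<^sup>b 3\<^sup>c\<close>, \<open>2\<^sup>d 3\<^sup>e\<close>,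
  \<open>3\<^sup>f\<close>; \<open>is_tableau\<close> says that its columns strictly increase.
\<close>

definition tableau_word :: "nat \<Rightarrow> nat \<Rightarrow> nat \<Rightarrow> nat \<Rightarrow> nat \<Rightarrow> nat \<Rightarrow> nat list" where
  "tableau_word a b c d e f =
     replicate f 3 @ replicate d 2 @ replicate e 3 @ replicate a 1 @ replicate b 2 @ replicate c 3"

definition is_tableau :: "nat \<Rightarrow> nat \<Rightarrow> nat \<Rightarrow> nat \<Rightarrow> nat \<Rightarrow> nat \<Rightarrow> bool" where
  "is_tableau a b c d e f \<longleftrightarrow> d \<le> a \<and> d + e \<le> a + b \<and> f \<le> d"

definition has_tableau :: "nat list \<Rightarrow> bool" where
  "has_tableau w \<longleftrightarrow>
     (\<exists>a b c d e f. is_tableau a b c d e f \<and> knuth_equiv w (tableau_word a b c d e f))"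

lemma has_tableauI:
  "is_tableau a b c d e f \<Longrightarrow> knuth_equiv w (tableau_word a b c d e f) \<Longrightarrow> has_tableau w"
  unfolding has_tableau_def by blast

lemma has_tableau_eqI:
  "is_tableau a b c d e f \<Longrightarrow> w = tableau_word a b c d e f \<Longrightarrow> has_tableau w"
  using has_tableauI knu_refl by metis

lemma has_tableau_knuth_equiv: "knuth_equiv w w' \<Longrightarrow> has_tableau w' \<Longrightarrow> has_tableau w"
  unfolding has_tableau_def by (blast intro: knu_trans)

lemma has_tableau_snoc_3:
  assumes "is_tableau a b c d e f"
  shows "has_tableau (tableau_word a b c d e f @ [3])"
  using assms
  by (intro has_tableau_eqI[of a b "Suc c" d e f])
    (simp_all add: is_tableau_def tableau_word_def replicate_append_same)

lemma has_tableau_snoc_2: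
  assumes "is_tableau a b c d e f"
  shows "has_tableau (tableau_word a b c d e f @ [2])"
proof (cases c)
  case 0
  with assms show ?thesis
    by (intro has_tableau_eqI[of a "Suc b" c d e f])
      (simp_all add: is_tableau_def tableau_word_def replicate_append_same)
next
  case (Suc c')
  have "knuth_equiv (tableau_word a b c d e f @ [2]) ((replicate f 3 @ replicate d 2 @ replicate e 3) @
      (replicate a 1 @ replicate b 2 @ replicate (Suc c') 3 @ [2]))"
    by (simp add: Suc tableau_word_def knu_refl)
  also have "knuth_equiv \<dots> ((replicate f 3 @ replicate d 2 @ replicate e 3) @
      (3 # replicate a 1 @ replicate (Suc b) 2 @ replicate c' 3))"
    by (intro knuth_equiv_append_left knuth_row_insert_middle) simp_all
  also have "\<dots> = tableau_word a (Suc b) c' d (Suc e) f"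
    by (simp add: tableau_word_def replicate_app_Cons_same)
  finally show ?thesis
    using assms by (intro has_tableauI) (simp_all add: is_tableau_def)
qed

lemma has_tableau_snoc_1:
  assumes tab: "is_tableau a b c d e f"
  shows "has_tableau (tableau_word a b c d e f @ [1])"
proof (cases b)
  case 0
  show ?thesis
  proof (cases c)
    case 0
    with \<open>b = 0\<close> tab show ?thesis
      by (intro has_tableau_eqI[of "Suc a" b c d e f])
        (simp_all add: is_tableau_def tableau_word_def replicate_append_same)
  next
    case (Suc c')
    have "knuth_equiv (tableau_word a b c d e f @ [1]) ((replicate f 3 @ replicate d 2 @ replicate e 3) @
        (replicate a 1 @ replicate (Suc c') 3 @ replicate 0 3 @ [1]))"
      by (simp add: \<open>b = 0\<close> Suc tableau_word_def knu_refl)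
    also have "knuth_equiv \<dots> ((replicate f 3 @ replicate d 2 @ replicate e 3) @
        (3 # replicate (Suc a) 1 @ replicate c' 3 @ replicate 0 3))"
      by (intro knuth_equiv_append_left knuth_row_insert_least) simp_all
    also have "\<dots> = tableau_word (Suc a) 0 c' d (Suc e) f"
      by (simp add: tableau_word_def replicate_app_Cons_same)
    finally show ?thesis
      using \<open>b = 0\<close> tab by (intro has_tableauI) (simp_all add: is_tableau_def)
  qed
next
  case (Suc b')
  have "knuth_equiv (tableau_word a b c d e f @ [1]) ((replicate f 3 @ replicate d 2 @ replicate e 3) @
      (replicate a 1 @ replicate (Suc b') 2 @ replicate c 3 @ [1]))"
    by (simp add: Suc tableau_word_def knu_refl)
  also have "knuth_equiv \<dots> ((replicate f 3 @ replicate d 2 @ replicate e 3) @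
      (2 # replicate (Suc a) 1 @ replicate b' 2 @ replicate c 3))"
    by (intro knuth_equiv_append_left knuth_row_insert_least) simp_all
  finally have bumped: "knuth_equiv (tableau_word a b c d e f @ [1])
      (replicate f 3 @ (replicate d 2 @ replicate e 3 @ [2]) @
        replicate (Suc a) 1 @ replicate b' 2 @ replicate c 3)"
    by simp
  show ?thesis
  proof (cases e)
    case 0
    with bumped Suc tab show ?thesis
      by (intro has_tableauI[of "Suc a" b' c "Suc d" 0 f])
        (simp_all add: is_tableau_def tableau_word_def replicate_append_same)
  next
    case (Suc e')
    note bumped
    also have "knuth_equiv (replicate f 3 @ (replicate d 2 @ replicate e 3 @ [2]) @
        replicate (Suc a) 1 @ replicate b' 2 @ replicate c 3)
      (replicate f 3 @ (3 # replicate (Suc d) 2 @ replicate e' 3) @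
        replicate (Suc a) 1 @ replicate b' 2 @ replicate c 3)"
      using knuth_row_insert_middle[of 1 2 3 0 d e'] by (intro knuth_equiv_cong) (simp add: Suc)
    also have "\<dots> = tableau_word (Suc a) b' c (Suc d) e' (Suc f)"
      by (simp add: tableau_word_def replicate_app_Cons_same)
    finally show ?thesis
      using \<open>b = Suc b'\<close> Suc tab by (intro has_tableauI) (simp_all add: is_tableau_def)
  qed
qed

lemma has_tableau_snoc:
  assumes "has_tableau w" and "x \<in> {1, 2, 3}"
  shows "has_tableau (w @ [x])"
proof -
  from assms(1) obtain a b c d e f where tab: "is_tableau a b c d e f"
    and equiv: "knuth_equiv w (tableau_word a b c d e f)"
    unfolding has_tableau_def by blast
  have "has_tableau (tableau_word a b c d e f @ [x])"
    using assms(2) has_tableau_snoc_1[OF tab] has_tableau_snoc_2[OF tab] has_tableau_snoc_3[OF tab]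
    by blast
  moreover have "knuth_equiv (w @ [x]) (tableau_word a b c d e f @ [x])"
    using equiv by (rule knuth_equiv_append_right)
  ultimately show ?thesis by (rule has_tableau_knuth_equiv[rotated])
qed

lemma has_tableau_word: "set w \<subseteq> {1, 2, 3} \<Longrightarrow> has_tableau w"
proof (induction w rule: rev_induct)
  case Nil
  show ?case by (rule has_tableau_eqI[of 0 0 0 0 0 0]) (simp_all add: is_tableau_def tableau_word_def)
next
  case (snoc x w)
  then show ?case by (simp add: has_tableau_snoc)
qed

section \<open>Evaluation of tableau reading words\<close>

text \<open>
  \<open>utE\<close>, the image of the empty word, is not the tropical identity: it is a left identity
  exactly on the matrices whose columns increase upwards.
\<close>

fun col_mono :: "utmat \<Rightarrow> bool" where
  "col_mono (UT p11 p12 p13 p22 p23 p33) \<longleftrightarrow> p22 \<le> p12 \<and> p23 \<le> p13 \<and> p33 \<le> p23"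

fun scale :: "real \<Rightarrow> utmat \<Rightarrow> utmat" where
  "scale r (UT p11 p12 p13 p22 p23 p33) = UT (r * p11) (r * p12) (r * p13) (r * p22) (r * p23) (r * p33)"

lemma utE_mult: "col_mono X \<Longrightarrow> utE * X = X"
  by (cases X) (simp add: utE_def max_def)

lemma scale_0: "scale 0 X = utE"
  by (cases X) (simp add: utE_def)

lemma word_eval_replicate:
  assumes step: "\<And>k. g l * scale (real k) (g l) = scale (real (Suc k)) (g l)" and "col_mono X"
  shows "word_eval g X (replicate k l) = scale (real k) (g l) * X"
proof (induction k)
  case 0
  show ?case using \<open>col_mono X\<close> by (simp add: scale_0 utE_mult)
next
  case (Suc k)
  then show ?case by (simp add: step flip: mult.assoc)
qed

lemma utA_mult_scale:
  "l \<in> {1, 2, 3} \<Longrightarrow> utA l * scale (real k) (utA l) = scale (real (Suc k)) (utA l)"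
  by (auto simp: utA_values algebra_simps)

lemma utAcheck_mult_scale:
  "l \<in> {1, 2, 3} \<Longrightarrow> utAcheck l * scale (real k) (utAcheck l) = scale (real (Suc k)) (utAcheck l)"
  by (auto simp: utAcheck_values algebra_simps)

lemma word_eval_utA_tableau_word:
  assumes "is_tableau a b c d e f"
  shows "word_eval utA utE (tableau_word a b c d e f) =
    UT a (a + b) (a + b + c) (d + b) (d + max b e + c) (f + e + c)"
  using assms
  by (simp add: tableau_word_def word_eval_replicate utA_mult_scale is_tableau_def utE_def
      utA_values max_def)

lemma word_eval_utAcheck_tableau_word:
  assumes "is_tableau a b c d e f"
  shows "word_eval utAcheck utE (tableau_word a b c d e f) =
    UT (- (f + e + c)) (- (f + min e b)) (- f) (- (d + b)) (- d) (- a)"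
  using assms
  by (simp add: tableau_word_def word_eval_replicate utAcheck_mult_scale is_tableau_def utE_def
      utAcheck_values max_def min_def)

lemma tableau_word_eq_if_word_eval_eq:
  assumes "is_tableau a b c d e f" and "is_tableau a' b' c' d' e' f'"
    and "word_eval utA utE (tableau_word a b c d e f) = word_eval utA utE (tableau_word a' b' c' d' e' f')"
    and "word_eval utAcheck utE (tableau_word a b c d e f) =
      word_eval utAcheck utE (tableau_word a' b' c' d' e' f')"
  shows "tableau_word a b c d e f = tableau_word a' b' c' d' e' f'"
proof -
  have "f = f'"
    using assms(4) by (simp add: word_eval_utAcheck_tableau_word assms(1,2))
  moreover
  have "UT a (a + b) (a + b + c) (d + b) (d + max b e + c) (f + e + c) =
      UT a' (a' + b') (a' + b' + c') (d' + b') (d' + max b' e' + c') (f' + e' + c')"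
    using assms(3) by (simp only: word_eval_utA_tableau_word assms(1,2))
  then have "a = a' \<and> a + b = a' + b' \<and> a + b + c = a' + b' + c' \<and> d + b = d' + b' \<and>
      f + e + c = f' + e' + c'"
    unfolding utmat.inject of_nat_eq_iff by blast
  then have "a = a'" "b = b'" "c = c'" "d = d'" "f + e = f' + e'"
    by linarith+
  ultimately show ?thesis
    by simp
qed

lemma knuth_equiv_if_word_eval_eq:
  assumes "set u \<subseteq> {1, 2, 3}" and "set v \<subseteq> {1, 2, 3}"
    and "word_eval utA utE u = word_eval utA utE v"
    and "word_eval utAcheck utE u = word_eval utAcheck utE v"
  shows "knuth_equiv u v"
proof -
  obtain a b c d e f where tab: "is_tableau a b c d e f"
    and u_equiv: "knuth_equiv u (tableau_word a b c d e f)"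
    using has_tableau_word[OF assms(1)] unfolding has_tableau_def by blast
  obtain a' b' c' d' e' f' where tab': "is_tableau a' b' c' d' e' f'"
    and v_equiv: "knuth_equiv v (tableau_word a' b' c' d' e' f')"
    using has_tableau_word[OF assms(2)] unfolding has_tableau_def by blast
  have "word_eval g utE (tableau_word a b c d e f) = word_eval g utE (tableau_word a' b' c' d' e' f')"
    if "plactic_relations {1, 2, 3} g" and "word_eval g utE u = word_eval g utE v" for g :: "nat \<Rightarrow> utmat"
    using word_eval_knuth_invariant[OF that(1) u_equiv assms(1)]
      word_eval_knuth_invariant[OF that(1) v_equiv assms(2)] that(2)
    by simp
  then have "tableau_word a b c d e f = tableau_word a' b' c' d' e' f'"
    using tab tab' assms(3,4) plactic_relations_utA plactic_relations_utAcheck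
    by (intro tableau_word_eq_if_word_eval_eq) simp_all
  with u_equiv v_equiv show ?thesis
    by (metis knu_sym knu_trans)
qed

theorem mainTheorem15:
  fixes u v :: "nat list"
  assumes "set u \<subseteq> {1, 2, 3}" and "set v \<subseteq> {1, 2, 3}"
  shows "knuth_equiv u v \<longleftrightarrow> (mho u = mho v \<and> Omega u = Omega v)"
proof
  assume "knuth_equiv u v"
  then show "mho u = mho v \<and> Omega u = Omega v"
    using assms(1) plactic_relations_utA plactic_relations_utAcheck
    by (simp add: mho_eq_word_eval Omega_eq_word_eval word_eval_knuth_invariant)
next
  assume "mho u = mho v \<and> Omega u = Omega v"
  then show "knuth_equiv u v"
    using assms by (intro knuth_equiv_if_word_eval_eq)
      (simp_all add: mho_eq_word_eval Omega_eq_word_eval to_tmat_inject)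
qed

end
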